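(* Let $N$ be a positive integer, let $G\in\mathbb{C}^{N\times N}$ and $\hat G^{-1}\in\mathbb{C}^{N\times N}$, and define the modeling-error matrix $\Delta=\hat G^{-1}G$. Write its entries in polar form as $\Delta_{ij}=\Delta_{m,ij}\,e^{\mathrm{i}\,\Delta_{p,ij}}$ with $\Delta_{m,ij}=|\Delta_{ij}|\ge 0$ and $\Delta_{p,ij}\in\mathbb{R}$ (here $\mathrm{i}=\sqrt{-1}$ and $i,j$ are indices), and assume $\Delta_{m,ii}\neq 0$ for all $i$. Let $\rho=\mathrm{diag}(\rho_1,\dots,\rho_N)$ with real $\rho_i$, and suppose that for every $i\in\{1,\dots,N\}$, $$\Delta_{m,ii}\cos\Delta_{p,ii} > \sum_{j\neq i}\Delta_{m,ij} \quad\text{and}\quad 0<\rho_i< 2\,\frac{\Delta_{m,ii}\cos\Delta_{p,ii}-\sum_{j\ne i}\Delta_{m,ij}}{\Delta_{m,ii}^2-\left(\sum_{j\neq i}\Delta_{m,ij}\right)^2}.$$ Then every eigenvalue of $I-\rho\Delta$ has magnitude less than one; in particular $G$ and $\hat G^{-1}$ are invertible, and for every $Y_d\in\mathbb{C}^N$ and every initial $U_0\in\mathbb{C}^N$ the sequence $U_k=U_{k-1}+\rho\,\hat G^{-1}(Y_d-GU_{k-1})$, $k\ge1$, converges to the desired input $U^*=G^{-1}Y_d$.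
   Context: This describes the iterative input update at a fixed frequency $\omega$ for a square multiple-input multiple-output linear system with transfer matrix $G=G(\omega)$, estimated inverse model $\hat G^{-1}=\hat G^{-1}(\omega)$, diagonal iteration gain $\rho=\rho(\omega)$, desired output $Y_d$ and input $U_k$ at iteration $k$. (Under the first condition, the denominator in the bound on $\rho_i$ is positive.) *)

theory Defs
  imports "HOL-Analysis.Analysis"
begin

definition diag_real :: "('n::finite \<Rightarrow> real) \<Rightarrow> complex^'n^'n" where
  "diag_real r = (\<chi> i j. if i = j then complex_of_real (r i) else 0)"

definition is_eigenvalue :: "complex^'n^'n \<Rightarrow> complex \<Rightarrow> bool" where
  "is_eigenvalue A l \<longleftrightarrow> (\<exists>v. v \<noteq> 0 \<and> A *v v = (\<chi> i. l * v $ i))"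

primrec ilc_seq :: "('n::finite \<Rightarrow> real) \<Rightarrow> complex^'n^'n \<Rightarrow> complex^'n^'n
    \<Rightarrow> complex^'n \<Rightarrow> complex^'n \<Rightarrow> nat \<Rightarrow> complex^'n" where
  "ilc_seq r Ginv G Yd U0 0 = U0"
| "ilc_seq r Ginv G Yd U0 (Suc k) =
     ilc_seq r Ginv G Yd U0 k + (diag_real r ** Ginv) *v (Yd - G *v ilc_seq r Ginv G Yd U0 k)"

end

theory Submission
  imports Defs
begin

text \<open>
  Every step multiplies the error \<open>U\<^sub>k - G\<^sup>-\<^sup>1 Y\<^sub>d\<close> by \<open>A = I - \<rho>\<Delta>\<close>.  The absolute
  row sum of \<open>A\<close> in row \<open>i\<close> is \<open>|1 - \<rho>\<^sub>i \<Delta>\<^sub>i\<^sub>i| + \<rho>\<^sub>i S\<^sub>i\<close>, where \<open>S\<^sub>i\<close> is the off-diagonal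
  absolute row sum of \<open>\<Delta>\<close>, and the bound on \<open>\<rho>\<^sub>i\<close> is exactly the condition
  \<open>|1 - \<rho>\<^sub>i \<Delta>\<^sub>i\<^sub>i|\<^sup>2 < (1 - \<rho>\<^sub>i S\<^sub>i)\<^sup>2\<close>.  So \<open>A\<close> is a strict contraction for the
  maximum norm: its eigenvalues lie in the unit disc, \<open>\<rho>\<Delta> = I - A\<close> is injective (hence \<open>G\<close>
  and the model inverse are invertible), and the error tends to zero geometrically.
\<close>

definition max_norm :: "complex^'n::finite \<Rightarrow> real" where
  "max_norm v = Max (range (\<lambda>i. cmod (v $ i)))"

lemma max_norm_ge: "cmod (v $ i) \<le> max_norm v"
  unfolding max_norm_def by (rule Max_ge) auto

lemma max_norm_nonneg: "0 \<le> max_norm v"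
  using max_norm_ge[of v] norm_ge_zero order_trans by blast

lemma max_norm_attained: obtains i where "max_norm v = cmod (v $ i)"
proof -
  have "max_norm v \<in> range (\<lambda>i. cmod (v $ i))"
    unfolding max_norm_def by (rule Max_in) auto
  then show ?thesis using that by auto
qed

lemma max_norm_le: "(\<And>i. cmod (v $ i) \<le> c) \<Longrightarrow> max_norm v \<le> c"
  unfolding max_norm_def by (subst Max_le_iff) auto

lemma max_norm_eq_0_iff: "max_norm v = 0 \<longleftrightarrow> v = 0"
proof
  assume "max_norm v = 0"
  then have "v $ i = 0" for i
    using max_norm_ge[of v i] by simp
  then show "v = 0" by (simp add: vec_eq_iff)
qed (simp add: max_norm_def)

lemma norm_le_card_mult_max_norm: "norm v \<le> real CARD('n) * max_norm (v :: complex^'n::finite)"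
proof -
  have "norm v \<le> (\<Sum>i\<in>UNIV. norm (v $ i))"
    unfolding norm_vec_def by (rule L2_set_le_sum) auto
  also have "\<dots> \<le> (\<Sum>i\<in>(UNIV::'n set). max_norm v)"
    by (rule sum_mono) (simp add: max_norm_ge)
  finally show ?thesis by simp
qed

definition max_row_sum :: "complex^'n^'n::finite \<Rightarrow> real" where
  "max_row_sum A = Max (range (\<lambda>i. \<Sum>j\<in>UNIV. cmod (A $ i $ j)))"

lemma row_sum_le_max_row_sum: "(\<Sum>j\<in>UNIV. cmod (A $ i $ j)) \<le> max_row_sum A"
  unfolding max_row_sum_def by (rule Max_ge) auto

lemma max_row_sum_nonneg: "0 \<le> max_row_sum A"
  by (rule order_trans[OF sum_nonneg row_sum_le_max_row_sum]) simp

lemma max_row_sum_less_iff: "max_row_sum A < c \<longleftrightarrow> (\<forall>i. (\<Sum>j\<in>UNIV. cmod (A $ i $ j)) < c)"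
  unfolding max_row_sum_def by (subst Max_less_iff) auto

lemma max_norm_mult_le: "max_norm (A *v v) \<le> max_row_sum A * max_norm v"
proof (rule max_norm_le)
  fix i
  have "cmod ((A *v v) $ i) = cmod (\<Sum>j\<in>UNIV. A $ i $ j * v $ j)"
    by (simp add: matrix_vector_mult_def)
  also have "\<dots> \<le> (\<Sum>j\<in>UNIV. cmod (A $ i $ j) * max_norm v)"
    by (rule order_trans[OF norm_sum sum_mono])
       (simp add: norm_mult mult_left_mono max_norm_ge)
  also have "\<dots> \<le> max_row_sum A * max_norm v"
    unfolding sum_distrib_right[symmetric]
    by (rule mult_right_mono[OF row_sum_le_max_row_sum max_norm_nonneg])
  finally show "cmod ((A *v v) $ i) \<le> max_row_sum A * max_norm v" .
qed

lemma eigenvalue_norm_le_max_row_sum: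
  assumes "is_eigenvalue A l"
  shows "cmod l \<le> max_row_sum A"
proof -
  obtain v where v: "v \<noteq> 0" "A *v v = (\<chi> i. l * v $ i)"
    using assms unfolding is_eigenvalue_def by blast
  obtain i where i: "max_norm v = cmod (v $ i)" by (rule max_norm_attained)
  have "cmod l * max_norm v = cmod ((A *v v) $ i)"
    using v(2) i by (simp add: norm_mult)
  also have "\<dots> \<le> max_row_sum A * max_norm v"
    by (rule order_trans[OF max_norm_ge max_norm_mult_le])
  finally show ?thesis
    using v(1) max_norm_nonneg[of v] max_norm_eq_0_iff[of v] by simp
qed

lemma invertible_if_max_row_sum_diff_less_1:
  fixes M :: "complex^'n^'n::finite"
  assumes "max_row_sum (mat 1 - M) < 1"
  shows "invertible M"
  unfolding invertible_left_inverse matrix_left_invertible_ker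
proof (intro allI impI)
  fix v assume "M *v v = 0"
  then have "(mat 1 - M) *v v = v"
    by (simp add: matrix_vector_mult_diff_rdistrib)
  then have "max_norm v \<le> max_row_sum (mat 1 - M) * max_norm v"
    using max_norm_mult_le[of "mat 1 - M" v] by simp
  then have "max_norm v = 0"
    using assms max_norm_nonneg[of v] by (smt (verit) mult_le_cancel_right1)
  then show "v = 0" by (simp add: max_norm_eq_0_iff)
qed

lemma iteration_tendsto_0_if_max_row_sum_less_1:
  assumes "max_row_sum A < 1" and step: "\<And>k. e (Suc k) = A *v e k"
  shows "e \<longlonglongrightarrow> 0"
proof -
  define q where "q = max_row_sum A"
  have q: "0 \<le> q" "q < 1"
    using assms(1) max_row_sum_nonneg unfolding q_def by auto
  have geometric: "max_norm (e k) \<le> q ^ k * max_norm (e 0)" for k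
  proof (induction k)
    case (Suc k)
    have "max_norm (e (Suc k)) \<le> q * max_norm (e k)"
      unfolding step q_def by (rule max_norm_mult_le)
    also have "\<dots> \<le> q * (q ^ k * max_norm (e 0))"
      by (rule mult_left_mono[OF Suc q(1)])
    finally show ?case by simp
  qed simp
  have "norm (e k) \<le> real CARD('a) * (q ^ k * max_norm (e 0))" for k
    by (rule order_trans[OF norm_le_card_mult_max_norm mult_left_mono[OF geometric]]) simp
  moreover have "(\<lambda>k. real CARD('a) * (q ^ k * max_norm (e 0))) \<longlonglongrightarrow> 0"
    using LIMSEQ_power_zero[of q] q
    by (intro tendsto_mult_right_zero tendsto_mult_left_zero) simp
  ultimately show ?thesis
    by (rule Lim_null_comparison[OF always_eventually[OF allI]])
qed

lemma cmod_one_minus_mult_cis_add_less_1: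
  fixes a r S \<theta> :: real
  assumes "0 < a" "0 \<le> S" "S < a * cos \<theta>" "0 < r"
    and r_bound: "r < 2 * ((a * cos \<theta> - S) / (a\<^sup>2 - S\<^sup>2))"
  shows "cmod (1 - complex_of_real r * (complex_of_real a * cis \<theta>)) + r * S < 1"
proof -
  have "a * cos \<theta> \<le> a" using \<open>0 < a\<close> by (simp add: mult_left_le)
  then have "S < a" using assms(3) by linarith
  then have "0 < a\<^sup>2 - S\<^sup>2" using \<open>0 \<le> S\<close> by (simp add: power_strict_mono)
  then have r_bound': "r * (a\<^sup>2 - S\<^sup>2) < 2 * (a * cos \<theta> - S)"
    using r_bound by (simp add: pos_less_divide_eq)
  have "r * (a + S) * (a - S) < 2 * (a - S)"
    using r_bound' \<open>a * cos \<theta> \<le> a\<close> by (simp add: power2_eq_square algebra_simps)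
  then have "r * (a + S) < 2"
    by (rule mult_right_less_imp_less) (use \<open>S < a\<close> in simp)
  moreover have "r * S < r * a" using \<open>0 < r\<close> \<open>S < a\<close> by simp
  ultimately have pos: "0 < 1 - r * S" by (simp add: algebra_simps)
  have "(cmod (1 - complex_of_real r * (complex_of_real a * cis \<theta>)))\<^sup>2
        = (1 - r * a * cos \<theta>)\<^sup>2 + (r * a * sin \<theta>)\<^sup>2"
    by (simp add: cmod_power2 cis.ctr mult.assoc)
  also have "\<dots> = (1 - r * S)\<^sup>2 - r * (2 * (a * cos \<theta> - S) - r * (a\<^sup>2 - S\<^sup>2))"
    unfolding power_mult_distrib[of _ "sin \<theta>"] sin_squared_eq
    by (simp add: power2_eq_square algebra_simps)
  also have "\<dots> < (1 - r * S)\<^sup>2"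
    using \<open>0 < r\<close> r_bound' by simp
  finally have "cmod (1 - complex_of_real r * (complex_of_real a * cis \<theta>)) < 1 - r * S"
    by (rule power2_less_imp_less) (use pos in simp)
  then show ?thesis by simp
qed

lemma diag_real_mult_nth: "(diag_real r ** M) $ i $ j = complex_of_real (r i) * M $ i $ j"
proof -
  have "(diag_real r ** M) $ i $ j = (\<Sum>k\<in>UNIV. if k = i then complex_of_real (r i) * M $ k $ j else 0)"
    unfolding diag_real_def matrix_matrix_mult_def vec_lambda_beta by (intro sum.cong) auto
  then show ?thesis by simp
qed

lemma row_sum_one_minus_diag_real_mult:
  assumes "0 \<le> r i"
  shows "(\<Sum>j\<in>UNIV. cmod ((mat 1 - diag_real r ** M) $ i $ j))
         = cmod (1 - complex_of_real (r i) * M $ i $ i) + r i * (\<Sum>j\<in>UNIV - {i}. cmod (M $ i $ j))"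
  using assms
  by (simp add: mat_def diag_real_mult_nth sum.remove[of UNIV i] sum_distrib_left norm_mult)

lemma ilc_seq_error_Suc:
  assumes "G *v Ustar = Yd"
  shows "ilc_seq r Ginv G Yd U0 (Suc k) - Ustar
         = (mat 1 - diag_real r ** (Ginv ** G)) *v (ilc_seq r Ginv G Yd U0 k - Ustar)"
proof -
  define U where "U = ilc_seq r Ginv G Yd U0 k"
  have "Yd - G *v U = G *v (Ustar - U)"
    unfolding assms[symmetric] matrix_vector_mult_diff_distrib ..
  then have "ilc_seq r Ginv G Yd U0 (Suc k) - Ustar = (U - Ustar) - (diag_real r ** (Ginv ** G)) *v (U - Ustar)"
    by (simp add: U_def matrix_vector_mul_assoc matrix_mul_assoc matrix_vector_mult_diff_distrib)
  then show ?thesis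
    by (simp add: U_def matrix_vector_mult_diff_rdistrib)
qed

lemma matrix_vector_mul_matrix_inv_cancel:
  assumes "invertible G"
  shows "G *v (matrix_inv G *v y) = y"
proof -
  have "G ** matrix_inv G = mat 1"
    using assms unfolding invertible_def matrix_inv_def by (rule someI_ex[THEN conjunct1])
  then show ?thesis by (simp add: matrix_vector_mul_assoc)
qed

theorem lemma2:
  fixes G Ginv :: "complex^'n^'n"
    and Dm Dp :: "'n \<Rightarrow> 'n \<Rightarrow> real"
    and rho :: "'n \<Rightarrow> real"
  defines "Delta \<equiv> Ginv ** G"
  assumes polar: "\<And>i j. Dm i j = cmod (Delta $ i $ j) \<and> Delta $ i $ j = complex_of_real (Dm i j) * cis (Dp i j)"
    and diag_nz: "\<And>i. Dm i i \<noteq> 0"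
    and dom: "\<And>i. Dm i i * cos (Dp i i) > (\<Sum>j\<in>UNIV - {i}. Dm i j)"
    and rho_pos: "\<And>i. 0 < rho i"
    and rho_bnd: "\<And>i. rho i < 2 * ((Dm i i * cos (Dp i i) - (\<Sum>j\<in>UNIV - {i}. Dm i j))
                     / ((Dm i i)\<^sup>2 - (\<Sum>j\<in>UNIV - {i}. Dm i j)\<^sup>2))"
  shows "(\<forall>l. is_eigenvalue (mat 1 - diag_real rho ** Delta) l \<longrightarrow> cmod l < 1)
         \<and> invertible G \<and> invertible Ginv
         \<and> (\<forall>Yd U0. (\<lambda>k. ilc_seq rho Ginv G Yd U0 k) \<longlonglongrightarrow> matrix_inv G *v Yd)"
proof -
  have norm_Delta: "cmod (Delta $ i $ j) = Dm i j" for i j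
    using conjunct1[OF polar] by (rule sym)
  have Delta_diag: "Delta $ i $ i = complex_of_real (Dm i i) * cis (Dp i i)" for i
    by (rule conjunct2[OF polar])
  have Dm_nonneg: "0 \<le> Dm i j" for i j
    using norm_Delta[of i j] norm_ge_zero by metis
  then have "0 < Dm i i" for i
    using diag_nz[of i] by (simp add: order_less_le)
  then have contraction: "max_row_sum (mat 1 - diag_real rho ** Delta) < 1"
    unfolding max_row_sum_less_iff row_sum_one_minus_diag_real_mult[OF less_imp_le[OF rho_pos]]
      Delta_diag norm_Delta
    by (intro allI cmod_one_minus_mult_cis_add_less_1 sum_nonneg Dm_nonneg dom rho_pos rho_bnd)
  then have "invertible (diag_real rho ** Delta)"
    by (rule invertible_if_max_row_sum_diff_less_1)
  then have invertible: "invertible G" "invertible Ginv"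
    by (auto simp: invertible_det_nz det_mul Delta_def)
  have "(\<lambda>k. ilc_seq rho Ginv G Yd U0 k) \<longlonglongrightarrow> matrix_inv G *v Yd" for Yd U0
  proof (rule LIM_zero_cancel)
    show "(\<lambda>k. ilc_seq rho Ginv G Yd U0 k - matrix_inv G *v Yd) \<longlonglongrightarrow> 0"
      using contraction
      by (rule iteration_tendsto_0_if_max_row_sum_less_1) (unfold Delta_def,
          rule ilc_seq_error_Suc[OF matrix_vector_mul_matrix_inv_cancel[OF invertible(1)]])
  qed
  moreover have "cmod l < 1" if "is_eigenvalue (mat 1 - diag_real rho ** Delta) l" for l
    using eigenvalue_norm_le_max_row_sum[OF that] contraction by simp
  ultimately show ?thesis
    using invertible by (intro conjI allI impI)
qed

end
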